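(* Consider online multiclass classification with an arbitrary feedback graph $\mathcal{G}=([K],\mathcal{E})$, and suppose that for every round $t$ the loss $\ell_t=\ell(\cdot,\mathbf{x}_t,y_t)$ is a regular surrogate loss with respect to $\ell$. Run Gappletron on $\mathcal{G}$ (with any $\gamma\ge 0$ and any OCO algorithm $\mathcal{A}$) with a gap map $a:\mathbb{R}^{K\times d}\times\mathbb{R}^d\to[0,1]$ satisfying $a(\mathbf{W}_t,\mathbf{x}_t)=\ell(\mathbf{W}_t,\mathbf{x}_t,y_t^\star)$ for all $t$. Then for every round $t$, $$\sum_{y\in[K]} p_t'(y)\,\mathbb{1}[y\neq y_t]\;\le\;\frac{K-1}{K}\,\ell_t(\mathbf{W}_t)+\gamma_t .$$
   Context: Setting: for $t=1,\dots,T$ an oblivious adversary fixes $\mathbf{x}_t\in\mathbb{R}^d$ and $y_t\in[K]=\{1,\dots,K\}$; the learner sees $\mathbf{x}_t$ and predicts $y_t'\in[K]$. A feedback graph is a directed graph $\mathcal{G}=([K],\mathcal{E})$ in which every node has at least one incoming edge (self-loops allowed); $\mathrm{out}(y')=\{y:(y',y)\in\mathcal{E}\}$. After predicting $y_t'$ the learner observes the pairs $(y,\mathbb{1}[y\ne y_t])$ for $y\in\mathrm{out}(y_t')$ (so $y_t$ is learned iff $y_t\in\mathrm{out}(y_t')$); if a node has $K-1$ outgoing edges the missing edge is added. $\mathcal{Q}=\{y':\mathrm{out}(y')=[K]\}$ is the (possibly empty) set of revealing actions. A dominating set is $S\subseteq[K]$ such that every $y\in[K]$ lies in $\mathrm{out}(y')$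 for some $y'\in S$; $\rho$ is the minimum size of a dominating set and $S$ denotes a minimum dominating set. $\mathbf{1}$ is the all-ones vector, $\mathbf{1}_S$ the indicator vector of $S$, $\mathbf{e}_k$ the $k$-th basis vector of $\mathbb{R}^K$. $P_t,\mathbb{E}_t$ denote probability/expectation conditional on past predictions and feedback. Predictors $\mathbf{W}\in\mathcal{W}\subseteq\mathbb{R}^{K\times d}$ ($\mathcal{W}$ convex) with rows $\mathbf{W}^1,\dots,\mathbf{W}^K$, identified with vectors in $\mathbb{R}^{Kd}$; $\|\cdot\|$ is a fixed norm on $\mathbb{R}^{Kd}$. Let $\ell:\mathcal{W}\times\mathbb{R}^d\times[K]\to\mathbb{R}_+$ be convex in $\mathbf{W}$ and such that for all $\mathbf{W}\in\mathcal{W}$, $\mathbf{x}\in\mathbb{R}^d$ and all $y\ne y^\star:=\arg\max_k\langle \mathbf{W}^k,\mathbf{x}\rangle$: $\frac{K-1}{K}\ell(\mathbf{W},\mathbf{x},y)+\frac1K\ell(\mathbf{W},\mathbf{x},y^\star)\ge 1$. Then $\ell_t=\ell(\cdot,\mathbf{x}_t,y_t)$ is a regular surrogate loss (with constant $L>0$) if $\|\nabla\ell_t(\mathbf{W})\|^2\le 2L\,\ell_t(\mathbf{W})$ for all $\mathbf{W}\in\mathcal{W}$. Gappletron (inputs: $\mathcal{Q}$, $S$, an online convex optimization algorithm $\mathcal{A}$ on $\mathcal{W}$, $\gamma\ge0$, gap map $a$): $\mathbf{W}_1$ is output by $\mathcal{A}$. At round $t$: $y_t^\star=\arg\max_k\langle\mathbf{W}_t^k,\mathbf{x}_t\rangle$;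 $\gamma_t=0$ if $y_t^\star\in\mathcal{Q}$, else $\gamma_t=\min\{\tfrac12,\gamma/\sqrt{|\{s\le t:y_s^\star\notin\mathcal{Q}\}|}\}$; $a_t=a(\mathbf{W}_t,\mathbf{x}_t)$; $\zeta_t=\mathbb{1}[\gamma_t\le a_t]$; $\mathbf{p}_t'=(1-\zeta_t a_t-(1-\zeta_t)\gamma_t)\mathbf{e}_{y_t^\star}+\zeta_t a_t\frac1K\mathbf{1}+(1-\zeta_t)\frac{\gamma_t}{\rho}\mathbf{1}_S$; predict $y_t'\sim\mathbf{p}_t'$; set $v_t=\mathbb{1}[y_t\in\mathrm{out}(y_t')]/P_t(y_t\in\mathrm{out}(y_t'))$ and $\widehat\ell_t(\mathbf{W})=v_t\ell_t(\mathbf{W})$; feed $\widehat\ell_t$ to $\mathcal{A}$ and receive $\mathbf{W}_{t+1}$. *)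

theory Defs
  imports "HOL-Analysis.Analysis"
begin

text \<open>Labels are the elements of a finite type 'k (so K = CARD('k)); a predictor
 W is a K x d real matrix  real^'d^'k  whose k-th row is  W $ k.\<close>

definition feedback_graph :: "('k::finite \<times> 'k) set \<Rightarrow> bool" where
  "feedback_graph E \<longleftrightarrow> (\<forall>y. \<exists>y'. (y', y) \<in> E)"

definition out0 :: "('k::finite \<times> 'k) set \<Rightarrow> 'k \<Rightarrow> 'k set" where
  "out0 E y' = {y. (y', y) \<in> E}"

text \<open>Out-neighbourhood after the convention: a node with K-1 outgoing edges gets the missing one.\<close>
definition out :: "('k::finite \<times> 'k) set \<Rightarrow> 'k \<Rightarrow> 'k set" where
  "out E y' = (if card (out0 E y') = CARD('k) - 1 then UNIV else out0 E y')"

definition revealing :: "('k::finite \<times> 'k) set \<Rightarrow> 'k set" where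
  "revealing E = {y'. out E y' = UNIV}"

definition dominating :: "('k::finite \<times> 'k) set \<Rightarrow> 'k set \<Rightarrow> bool" where
  "dominating E S \<longleftrightarrow> (\<forall>y. \<exists>y'\<in>S. y \<in> out E y')"

definition min_dominating :: "('k::finite \<times> 'k) set \<Rightarrow> 'k set \<Rightarrow> bool" where
  "min_dominating E S \<longleftrightarrow> dominating E S \<and> (\<forall>S'. dominating E S' \<longrightarrow> card S \<le> card S')"

definition is_norm :: "('a::real_vector \<Rightarrow> real) \<Rightarrow> bool" where
  "is_norm N \<longleftrightarrow> (\<forall>v. 0 \<le> N v) \<and> (\<forall>v. N v = 0 \<longleftrightarrow> v = 0)
     \<and> (\<forall>c v. N (c *\<^sub>R v) = \<bar>c\<bar> * N v) \<and> (\<forall>u v. N (u + v) \<le> N u + N v)"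

definition regular_surrogate ::
  "('a::real_inner \<Rightarrow> real) \<Rightarrow> real \<Rightarrow> 'a set \<Rightarrow> ('a \<Rightarrow> real) \<Rightarrow> bool" where
  "regular_surrogate N L Wset f \<longleftrightarrow> L > 0 \<and>
     (\<forall>W\<in>Wset. \<exists>g. (f has_derivative (\<lambda>h. g \<bullet> h)) (at W within Wset)
                   \<and> (N g)\<^sup>2 \<le> 2 * L * f W)"

text \<open>gamma_t of Gappletron, rounds t = 1,2,...; ystar s is the argmax label at round s.\<close>
definition gamma_round :: "'k set \<Rightarrow> (nat \<Rightarrow> 'k) \<Rightarrow> real \<Rightarrow> nat \<Rightarrow> real" where
  "gamma_round Q ystar gam t =
     (if ystar t \<in> Q then 0
      else min (1/2) (gam / sqrt (real (card {s \<in> {1..t}. ystar s \<notin> Q}))))"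

definition gap_dist :: "'k::finite set \<Rightarrow> 'k \<Rightarrow> real \<Rightarrow> real \<Rightarrow> 'k \<Rightarrow> real" where
  "gap_dist S yst a g y =
     (let z = (if g \<le> a then 1 else 0 :: real) in
        (1 - z * a - (1 - z) * g) * (if y = yst then 1 else 0)
        + z * a * (1 / real CARD('k))
        + (1 - z) * (g / real (card S)) * (if y \<in> S then 1 else 0))"

end

theory Submission
  imports Defs
begin

text \<open>The expected number of mistakes is 1 - p'_t(y_t). On the gap branch (gamma_t \<le> a_t) the
  learner keeps mass a_t/K on every label, and a_t = \<ell>_t evaluated at y*_t, so for y_t \<noteq> y*_t the
  surrogate condition gives exactly the bound; for y_t = y*_t the mistake probability is
  (K-1)/K a_t. On the exploration branch a_t < gamma_t, and only the mass gamma_t is moved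
  off y*_t.\<close>

lemma dominating_nonempty: "dominating E S \<Longrightarrow> S \<noteq> {}"
  unfolding dominating_def by blast

lemma gamma_round_nonneg: "gam \<ge> 0 \<Longrightarrow> gamma_round Q ystar gam t \<ge> 0"
  unfolding gamma_round_def by auto

lemma sum_mult_indicator_neq:
  fixes p :: "'a::finite \<Rightarrow> 'b::comm_ring_1"
  shows "(\<Sum>k\<in>UNIV. p k * (if k \<noteq> y then 1 else 0)) = (\<Sum>k\<in>UNIV. p k) - p y"
proof -
  have "(\<Sum>k\<in>UNIV. p k * (if k \<noteq> y then 1 else 0)) = (\<Sum>k\<in>UNIV. p k - (if k = y then p k else 0))"
    by (rule sum.cong) auto
  then show ?thesis
    by (simp add: sum_subtractf)
qed

lemma sum_gap_dist:
  fixes S :: "'k::finite set"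
  assumes "S \<noteq> {}"
  shows "(\<Sum>k\<in>UNIV. gap_dist S yst a g k) = 1"
proof -
  have card_S: "(\<Sum>k\<in>UNIV. if k \<in> S then 1 else 0 :: real) = real (card S)" "real (card S) > 0"
    using assms by (simp_all add: sum.If_cases card_gt_0_iff)
  have "(\<Sum>k\<in>UNIV. gap_dist S yst a g k)
      = (if g \<le> a then (1 - a) + real CARD('k) * (a / real CARD('k))
         else (1 - g) + g / real (card S) * real (card S))"
    unfolding gap_dist_def Let_def
    by (simp add: sum.distrib sum_distrib_left[symmetric] sum_divide_distrib[symmetric] flip: card_S(1))
  also have "\<dots> = 1"
    using card_S(2) by auto
  finally show ?thesis .
qed

lemma gap_dist_eq:
  fixes S :: "'k::finite set"
  shows "gap_dist S yst a g y =
     (if g \<le> a then (if y = yst then 1 - a else 0) + a / real CARD('k)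
      else (if y = yst then 1 - g else 0) + (if y \<in> S then g / real (card S) else 0))"
  unfolding gap_dist_def by simp

lemma gap_dist_mistake_le:
  fixes l :: "'k::finite \<Rightarrow> real"
  defines "K \<equiv> real CARD('k)"
  assumes l_yst: "0 \<le> l yst" and g: "0 \<le> g"
    and surrogate: "y \<noteq> yst \<Longrightarrow> 1 \<le> (K - 1) / K * l y + 1 / K * l yst"
  shows "1 - gap_dist S yst (l yst) g y \<le> (K - 1) / K * l y + g"
proof (cases "y = yst")
  case True
  have "gap_dist S yst (l yst) g y \<ge> (if g \<le> l yst then 1 - (K - 1) / K * l yst else 1 - g)"
    using True g unfolding gap_dist_eq K_def by (simp add: field_simps)
  moreover have "0 \<le> (K - 1) / K * l yst"
    using l_yst by (simp add: K_def Suc_le_eq)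
  ultimately show ?thesis
    using True g by (auto split: if_splits)
next
  case False
  have "l yst / K \<le> l yst"
    using l_yst by (simp add: K_def divide_le_eq mult_le_cancel_left1 Suc_le_eq)
  moreover have "gap_dist S yst (l yst) g y \<ge> (if g \<le> l yst then l yst / K else 0)"
    using False g unfolding gap_dist_eq K_def by simp
  ultimately show ?thesis
    using surrogate[OF False] g by (auto split: if_splits)
qed

theorem lemma1:
  fixes E :: "('k::finite \<times> 'k) set"
    and S :: "'k set"
    and Wset :: "(real^'d^'k) set"
    and loss :: "real^'d^'k \<Rightarrow> real^'d \<Rightarrow> 'k \<Rightarrow> real"
    and am :: "real^'d^'k \<Rightarrow> real^'d \<Rightarrow> 'k"
    and N :: "real^'d^'k \<Rightarrow> real"
    and L gam :: real
    and agap :: "real^'d^'k \<Rightarrow> real^'d \<Rightarrow> real"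
    and W :: "nat \<Rightarrow> real^'d^'k"
    and x :: "nat \<Rightarrow> real^'d"
    and y :: "nat \<Rightarrow> 'k"
    and t :: nat
  assumes graph: "feedback_graph E"
    and domS: "min_dominating E S"
    and convW: "convex Wset"
    and normN: "is_norm N"
    and argmax: "\<And>V v k. V $ k \<bullet> v \<le> V $ (am V v) \<bullet> v"
    and loss_nonneg: "\<And>V v k. V \<in> Wset \<Longrightarrow> 0 \<le> loss V v k"
    and loss_convex: "\<And>v k. convex_on Wset (\<lambda>V. loss V v k)"
    and loss_cond: "\<And>V v k. V \<in> Wset \<Longrightarrow> k \<noteq> am V v \<Longrightarrow>
        (real CARD('k) - 1) / real CARD('k) * loss V v k
          + 1 / real CARD('k) * loss V v (am V v) \<ge> 1"
    and regular: "\<And>s. s \<ge> 1 \<Longrightarrow> regular_surrogate N L Wset (\<lambda>V. loss V (x s) (y s))"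
    and gam_nonneg: "gam \<ge> 0"
    and agap_range: "\<And>V v. 0 \<le> agap V v \<and> agap V v \<le> 1"
    and agap_loss: "\<And>s. s \<ge> 1 \<Longrightarrow> agap (W s) (x s) = loss (W s) (x s) (am (W s) (x s))"
    and W_in: "\<And>s. s \<ge> 1 \<Longrightarrow> W s \<in> Wset"
    and t_pos: "t \<ge> 1"
  shows "(\<Sum>k\<in>UNIV. gap_dist S (am (W t) (x t)) (agap (W t) (x t))
              (gamma_round (revealing E) (\<lambda>s. am (W s) (x s)) gam t) k
            * (if k \<noteq> y t then 1 else 0))
         \<le> (real CARD('k) - 1) / real CARD('k) * loss (W t) (x t) (y t)
            + gamma_round (revealing E) (\<lambda>s. am (W s) (x s)) gam t"
proof -
  let ?yst = "am (W t) (x t)"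
  let ?g = "gamma_round (revealing E) (\<lambda>s. am (W s) (x s)) gam t"
  have W_t: "W t \<in> Wset"
    using W_in t_pos .
  have "(\<Sum>k\<in>UNIV. gap_dist S ?yst (agap (W t) (x t)) ?g k) = 1"
    using domS dominating_nonempty sum_gap_dist unfolding min_dominating_def by blast
  moreover have "1 - gap_dist S ?yst (loss (W t) (x t) ?yst) ?g (y t)
      \<le> (real CARD('k) - 1) / real CARD('k) * loss (W t) (x t) (y t) + ?g"
    using loss_nonneg[OF W_t] gamma_round_nonneg[OF gam_nonneg] loss_cond[OF W_t]
    by (rule gap_dist_mistake_le)
  ultimately show ?thesis
    by (simp add: sum_mult_indicator_neq agap_loss[OF t_pos])
qed

end
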